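(* For all $n,m\ge2$, $C(S^1)^{(n)}\otimes_{\min}C(S^1)^{(m)}\neq C(S^1)^{(n)}\otimes_{\max}C(S^1)^{(m)}$; that is, the minimal and maximal operator system tensor products of the operator systems of $n\times n$ and $m\times m$ Toeplitz matrices have different matrix positivity cones.
   Context: $C(S^1)^{(n)}$ is the operator subsystem of $M_n(\mathbb C)$ of Toeplitz matrices $[\tau_{k-\ell}]$ with unit the identity. For operator systems $\mathcal R\subseteq B(\mathcal H)$, $\mathcal S\subseteq B(\mathcal K)$, $\mathcal R\otimes_{\min}\mathcal S$ is the algebraic tensor product with matrix order inherited from $B(\mathcal H\otimes\mathcal K)$. In $\mathcal R\otimes_{\max}\mathcal S$, $x\in M_p(\mathcal R\otimes\mathcal S)$ is positive iff for every $\varepsilon>0$ there exist $a\in M_k(\mathcal R)_+$, $b\in M_l(\mathcal S)_+$ and linear $\delta:\mathbb C^p\to\mathbb C^k\otimes\mathbb C^l$ with $\varepsilon(e_{\mathcal R}\otimes e_{\mathcal S})_p+x=\delta^*(a\otimes b)\delta$. *)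

theory Defs
  imports Complex_Main
begin

text \<open>Matrices are functions of indices; only indices in range matter.
  An n x n complex matrix is a function nat => nat => complex (indices < n).\<close>

definition toeplitz :: "nat \<Rightarrow> (nat \<Rightarrow> nat \<Rightarrow> complex) \<Rightarrow> bool" where
  "toeplitz n A \<longleftrightarrow>
     (\<forall>r r' t t'. r < n \<and> r' < n \<and> t < n \<and> t' < n \<and> int r - int r' = int t - int t'
        \<longrightarrow> A r r' = A t t')"

definition psd_on :: "'i set \<Rightarrow> ('i \<Rightarrow> 'i \<Rightarrow> complex) \<Rightarrow> bool" where
  "psd_on I M \<longleftrightarrow>
     (\<forall>v :: 'i \<Rightarrow> complex.
        Im (\<Sum>x\<in>I. \<Sum>y\<in>I. cnj (v x) * M x y * v y) = 0 \<and>
        Re (\<Sum>x\<in>I. \<Sum>y\<in>I. cnj (v x) * M x y * v y) \<ge> 0)"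

text \<open>M_k(C(S^1)^(n)): k x k block matrices a i j (i,j < k) whose blocks a i j are
  n x n Toeplitz matrices (entries a i j r r').\<close>
definition in_Mk_toep :: "nat \<Rightarrow> nat \<Rightarrow> (nat \<Rightarrow> nat \<Rightarrow> nat \<Rightarrow> nat \<Rightarrow> complex) \<Rightarrow> bool" where
  "in_Mk_toep n k a \<longleftrightarrow> (\<forall>i<k. \<forall>j<k. toeplitz n (a i j))"

definition pos_Mk_toep :: "nat \<Rightarrow> nat \<Rightarrow> (nat \<Rightarrow> nat \<Rightarrow> nat \<Rightarrow> nat \<Rightarrow> complex) \<Rightarrow> bool" where
  "pos_Mk_toep n k a \<longleftrightarrow> in_Mk_toep n k a \<and>
     psd_on ({..<k} \<times> {..<n}) (\<lambda>(i, r) (j, r'). a i j r r')"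

text \<open>Algebraic tensor product C(S^1)^(n) \<otimes> C(S^1)^(m), realised inside
  M_n \<otimes> M_m = matrices indexed by pairs (r,s), r < n, s < m:
  finite sums of elementary tensors A \<otimes> B with A, B Toeplitz.\<close>
definition in_toep_tensor :: "nat \<Rightarrow> nat \<Rightarrow> (nat \<times> nat \<Rightarrow> nat \<times> nat \<Rightarrow> complex) \<Rightarrow> bool" where
  "in_toep_tensor n m Y \<longleftrightarrow>
     (\<exists>(N::nat) (A :: nat \<Rightarrow> nat \<Rightarrow> nat \<Rightarrow> complex) (B :: nat \<Rightarrow> nat \<Rightarrow> nat \<Rightarrow> complex).
        (\<forall>q<N. toeplitz n (A q) \<and> toeplitz m (B q)) \<and>
        (\<forall>r<n. \<forall>r'<n. \<forall>s<m. \<forall>s'<m.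
            Y (r, s) (r', s') = (\<Sum>q<N. A q r r' * B q s s')))"

definition in_Mp_tensor ::
  "nat \<Rightarrow> nat \<Rightarrow> nat \<Rightarrow> (nat \<Rightarrow> nat \<Rightarrow> nat \<times> nat \<Rightarrow> nat \<times> nat \<Rightarrow> complex) \<Rightarrow> bool" where
  "in_Mp_tensor n m p X \<longleftrightarrow> (\<forall>i<p. \<forall>j<p. in_toep_tensor n m (X i j))"

text \<open>Min tensor positivity: positivity as an operator on C^p \<otimes> C^n \<otimes> C^m.\<close>
definition min_pos ::
  "nat \<Rightarrow> nat \<Rightarrow> nat \<Rightarrow> (nat \<Rightarrow> nat \<Rightarrow> nat \<times> nat \<Rightarrow> nat \<times> nat \<Rightarrow> complex) \<Rightarrow> bool" where
  "min_pos n m p X \<longleftrightarrow>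
     psd_on ({..<p} \<times> {..<n} \<times> {..<m}) (\<lambda>(i, r, s) (j, r', s'). X i j (r, s) (r', s'))"

text \<open>Max tensor positivity: for every \<epsilon> > 0 there are a \<in> M_k(T_n)_+, b \<in> M_l(T_m)_+
  and a linear map \<delta> : C^p \<rightarrow> C^k \<otimes> C^l (a (k l) x p matrix \<delta> (i1,j1) i) with
  \<epsilon> (I_n \<otimes> I_m)_p + X = \<delta>^* (a \<otimes> b) \<delta>.\<close>
definition max_pos ::
  "nat \<Rightarrow> nat \<Rightarrow> nat \<Rightarrow> (nat \<Rightarrow> nat \<Rightarrow> nat \<times> nat \<Rightarrow> nat \<times> nat \<Rightarrow> complex) \<Rightarrow> bool" where
  "max_pos n m p X \<longleftrightarrow>
     (\<forall>\<epsilon>::real. \<epsilon> > 0 \<longrightarrow>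
       (\<exists>(k::nat) (l::nat) a b (\<delta> :: nat \<times> nat \<Rightarrow> nat \<Rightarrow> complex).
          k \<ge> 1 \<and> l \<ge> 1 \<and> pos_Mk_toep n k a \<and> pos_Mk_toep m l b \<and>
          (\<forall>i<p. \<forall>j<p. \<forall>r<n. \<forall>r'<n. \<forall>s<m. \<forall>s'<m.
             complex_of_real \<epsilon> * (if i = j \<and> r = r' \<and> s = s' then 1 else 0) + X i j (r, s) (r', s')
             = (\<Sum>i1<k. \<Sum>j1<l. \<Sum>i2<k. \<Sum>j2<l.
                  cnj (\<delta> (i1, j1) i) * (a i1 i2 r r' * b j1 j2 s s') * \<delta> (i2, j2) j))))"

end

theory Submission
  imports Defs "HOL-Library.Complex_Order" "Jordan_Normal_Form.Determinant"
begin

text \<open>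
  The witness X in M_2(T_n \<otimes> T_m) spreads a fixed 8 x 8 Gram matrix (of eight vectors in C^4)
  over the corner entries {0, n - 1} x {0, m - 1}; it is again a Gram matrix, hence min-positive.

  A linear functional \<phi> that reads only these corner entries separates X from the max cone:
  \<phi>(X) = -2 and \<phi>(I) = 6, but \<phi>(\<delta>* (a \<otimes> b) \<delta>) \<ge> 0 for all positive Toeplitz block
  matrices a, b. To see the latter, add a small multiple of the identity to a and b; their 2 x 2
  corner compressions are then positive definite and extend to positive 3 x 3 Toeplitz block
  matrices, and on the compressed tensor product of these extensions 6 \<phi> is a sum of eight
  quadratic forms. Letting the perturbation vanish, \<phi>(I/6 + X) = -1 < 0 shows that X is not
  max-positive.
\<close>

section \<open>Inner products of complex-valued functions\<close>

definition cinner :: "'t set \<Rightarrow> ('t \<Rightarrow> complex) \<Rightarrow> ('t \<Rightarrow> complex) \<Rightarrow> complex" where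
  "cinner T u v = (\<Sum>t\<in>T. cnj (u t) * v t)"

lemma cinner_commute: "cinner T v u = cnj (cinner T u v)"
  by (simp add: cinner_def mult.commute)

lemma cinner_self_nonneg: "0 \<le> cinner T u u"
  unfolding cinner_def by (intro sum_nonneg) (simp add: less_eq_complex_def)

lemma cinner_self_eq_0_iff:
  assumes "finite T"
  shows "cinner T v v = 0 \<longleftrightarrow> (\<forall>t\<in>T. v t = 0)"
proof -
  have "cinner T v v = of_real (\<Sum>t\<in>T. (cmod (v t))\<^sup>2)"
    unfolding cinner_def of_real_sum
    by (intro sum.cong refl) (subst complex_norm_square, simp add: mult.commute)
  then show ?thesis
    using assms by (simp add: sum_nonneg_eq_0_iff del: of_real_sum)
qed

lemma cinner_sum_left: "cinner T (\<lambda>t. \<Sum>m\<in>M. u m t) v = (\<Sum>m\<in>M. cinner T (u m) v)"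
  unfolding cinner_def by (simp add: cnj_sum sum_distrib_right sum.swap[of _ T])

lemma cinner_sum_right: "cinner T u (\<lambda>t. \<Sum>m\<in>M. v m t) = (\<Sum>m\<in>M. cinner T u (v m))"
  unfolding cinner_def by (simp add: sum_distrib_left sum.swap[of _ T])

lemma cinner_scale_left: "cinner T (\<lambda>t. c * u t) v = cnj c * cinner T u v"
  unfolding cinner_def by (simp add: sum_distrib_left mult_ac)

lemma cinner_scale_right: "cinner T u (\<lambda>t. c * v t) = c * cinner T u v"
  unfolding cinner_def by (simp add: sum_distrib_left mult_ac)

lemma cinner_diff_left: "cinner T (\<lambda>t. u t - u' t) v = cinner T u v - cinner T u' v"
  by (simp add: cinner_def algebra_simps sum_subtractf)

lemma cinner_diff_right: "cinner T u (\<lambda>t. v t - v' t) = cinner T u v - cinner T u v'"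
  by (simp add: cinner_def algebra_simps sum_subtractf)

lemma cinner_zero_left: "cinner T (\<lambda>_. 0) v = 0"
  by (simp add: cinner_def)

lemma cinner_times:
  "cinner (A \<times> B) (\<lambda>(a, b). u a * u' b) (\<lambda>(a, b). v a * v' b) = cinner A u v * cinner B u' v'"
  unfolding cinner_def sum_product sum.cartesian_product by (intro sum.cong) (auto simp: mult_ac)

lemma cinner_Plus:
  assumes "finite A" "finite B"
  shows "cinner (A <+> B) (case_sum u u') (case_sum v v') = cinner A u v + cinner B u' v'"
  using assms by (simp add: cinner_def sum.Plus)

lemma cinner_indicator:
  assumes "finite B" "p \<in> B"
  shows "cinner B (\<lambda>b. of_bool (b = p)) (\<lambda>b. of_bool (b = q)) = of_bool (p = q)"
proof -
  have "cnj (of_bool (b = p)) * of_bool (b = q) = (if b = p then of_bool (p = q) else (0 :: complex))" for b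
    by auto
  then show ?thesis
    using assms by (simp add: cinner_def)
qed

section \<open>Positive semidefinite matrices and Gram factorization\<close>

definition quad_form :: "'i set \<Rightarrow> ('i \<Rightarrow> 'i \<Rightarrow> complex) \<Rightarrow> ('i \<Rightarrow> complex) \<Rightarrow> complex" where
  "quad_form I M v = (\<Sum>x\<in>I. \<Sum>y\<in>I. cnj (v x) * M x y * v y)"

lemma psd_on_iff_quad_form_nonneg: "psd_on I M \<longleftrightarrow> (\<forall>v. 0 \<le> quad_form I M v)"
  unfolding psd_on_def quad_form_def less_eq_complex_def by auto

lemma psd_on_cong:
  "psd_on I M \<Longrightarrow> (\<And>x y. x \<in> I \<Longrightarrow> y \<in> I \<Longrightarrow> M x y = M' x y) \<Longrightarrow> psd_on I M'"
  unfolding psd_on_iff_quad_form_nonneg quad_form_def by (metis (no_types, lifting) sum.cong)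

lemma psd_on_gram: "psd_on I (\<lambda>x y. cinner T (f x) (f y))"
proof -
  have "quad_form I (\<lambda>x y. cinner T (f x) (f y)) v
          = cinner T (\<lambda>t. \<Sum>x\<in>I. v x * f x t) (\<lambda>t. \<Sum>y\<in>I. v y * f y t)" for v
    by (simp add: quad_form_def cinner_sum_left cinner_sum_right cinner_scale_left cinner_scale_right
        sum_distrib_left mult_ac)
  then show ?thesis
    unfolding psd_on_iff_quad_form_nonneg by (simp add: cinner_self_nonneg)
qed

lemma quad_form_extend_zero:
  assumes "finite J" "I \<subseteq> J"
  shows "quad_form J M (\<lambda>x. if x \<in> I then v x else 0) = quad_form I M v"
proof -
  have "quad_form J M (\<lambda>x. if x \<in> I then v x else 0)
      = (\<Sum>x\<in>I. \<Sum>y\<in>J. cnj (v x) * M x y * (if y \<in> I then v y else 0))"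
    unfolding quad_form_def using assms by (intro sum.mono_neutral_cong_right) auto
  also have "\<dots> = quad_form I M v"
    unfolding quad_form_def using assms
    by (intro sum.cong refl sum.mono_neutral_cong_right) auto
  finally show ?thesis .
qed

lemma psd_on_subset: "psd_on J M \<Longrightarrow> finite J \<Longrightarrow> I \<subseteq> J \<Longrightarrow> psd_on I M"
  unfolding psd_on_iff_quad_form_nonneg by (metis quad_form_extend_zero)

lemma psd_on_reindex:
  assumes "psd_on J M" "finite J" "f ` I \<subseteq> J" "inj_on f I"
  shows "psd_on I (\<lambda>x y. M (f x) (f y))"
  unfolding psd_on_iff_quad_form_nonneg
proof
  fix v
  have "quad_form I (\<lambda>x y. M (f x) (f y)) v = quad_form (f ` I) M (\<lambda>j. v (the_inv_into I f j))"
    unfolding quad_form_def using assms(4)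
    by (simp add: sum.reindex the_inv_into_f_f)
  also have "0 \<le> \<dots>"
    using psd_on_subset[OF assms(1-3)] unfolding psd_on_iff_quad_form_nonneg by blast
  finally show "0 \<le> quad_form I (\<lambda>x y. M (f x) (f y)) v" .
qed

lemma psd_on_diag_nonneg:
  assumes "psd_on I M" "finite I" "x \<in> I"
  shows "0 \<le> M x x"
proof -
  have "0 \<le> quad_form {x} M (\<lambda>_. 1)"
    using psd_on_subset[OF assms(1,2)] assms(3) unfolding psd_on_iff_quad_form_nonneg by blast
  then show ?thesis by (simp add: quad_form_def)
qed

lemma psd_on_hermitian:
  assumes "psd_on I M" "finite I" "x \<in> I" "y \<in> I"
  shows "M y x = cnj (M x y)"
proof (cases "x = y")
  case True
  then show ?thesis
    using psd_on_diag_nonneg[OF assms(1-3)] by (simp add: less_eq_complex_def complex_eq_iff)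
next
  case False
  have diag: "Im (M x x) = 0" "Im (M y y) = 0"
    using psd_on_diag_nonneg[OF assms(1,2)] assms(3,4) by (auto simp: less_eq_complex_def)
  have "psd_on {x, y} M"
    using psd_on_subset[OF assms(1,2)] assms(3,4) by simp
  then have "0 \<le> quad_form {x, y} M (\<lambda>z. if z = x then 1 else c)" for c
    unfolding psd_on_iff_quad_form_nonneg by blast
  moreover have "quad_form {x, y} M (\<lambda>z. if z = x then 1 else c)
      = M x x + M x y * c + cnj c * M y x + cnj c * M y y * c" for c
    using False by (simp add: quad_form_def)
  ultimately have "Im (M x x + M x y * c + cnj c * M y x + cnj c * M y y * c) = 0" for c
    by (simp add: less_eq_complex_def)
  from this[of 1] this[of \<i>] diag show ?thesis
    by (auto simp: complex_eq_iff)
qed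

lemma psd_on_diag_zero:
  assumes "psd_on I M" "finite I" "x \<in> I" "y \<in> I" "M x x = 0"
  shows "M x y = 0"
proof (rule ccontr)
  assume nz: "M x y \<noteq> 0"
  then have "x \<noteq> y" using assms(5) by auto
  have herm: "M y x = cnj (M x y)"
    using psd_on_hermitian[OF assms(1-4)] .
  define t where "t = (Re (M y y) + 1) / (2 * (cmod (M x y))\<^sup>2)"
  define s where "s = - of_real t * cnj (M x y)"
  have "s * M x y = - of_real (t * (cmod (M x y))\<^sup>2)"
    unfolding s_def by (subst of_real_mult, subst complex_norm_square) (simp add: mult_ac)
  also have "t * (cmod (M x y))\<^sup>2 = (Re (M y y) + 1) / 2"
    using nz by (simp add: t_def)
  finally have sb: "s * M x y = - of_real ((Re (M y y) + 1) / 2)" .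
  have "psd_on {x, y} M"
    using psd_on_subset[OF assms(1,2)] assms(3,4) by simp
  then have "0 \<le> quad_form {x, y} M (\<lambda>z. if z = x then cnj s else 1)"
    unfolding psd_on_iff_quad_form_nonneg by blast
  also have "quad_form {x, y} M (\<lambda>z. if z = x then cnj s else 1) = s * M x y + cnj (s * M x y) + M y y"
    using \<open>x \<noteq> y\<close> assms(5) herm by (simp add: quad_form_def)
  finally show False
    unfolding sb by (simp add: less_eq_complex_def)
qed

lemma psd_on_schur_complement:
  assumes psd: "psd_on (insert x I) M" and "finite I" "x \<notin> I"
  shows "psd_on I (\<lambda>u w. M u w - cnj (M x u) * M x w / M x x)"
proof (cases "M x x = 0")
  case True
  then show ?thesis
    using psd_on_subset[OF psd _ subset_insertI] \<open>finite I\<close> by simp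
next
  case False
  have fin: "finite (insert x I)"
    using \<open>finite I\<close> by simp
  have herm: "M y x = cnj (M x y)" if "y \<in> I" for y
    using psd_on_hermitian[OF psd fin, of x y] that by simp
  show ?thesis
    unfolding psd_on_iff_quad_form_nonneg
  proof
    fix v
    define w where "w = (\<Sum>y\<in>I. M x y * v y)"
    define s where "s = - w / M x x"
    have row: "(\<Sum>y\<in>I. cnj (v y) * M y x) = cnj w"
      unfolding w_def cnj_sum complex_cnj_mult by (intro sum.cong refl) (simp add: herm)
    have upd: "(v(x := s)) y = v y" if "y \<in> I" for y
      using that \<open>x \<notin> I\<close> by auto
    have "quad_form (insert x I) M (v(x := s))
        = cnj s * M x x * s + (\<Sum>y\<in>I. cnj s * M x y * v y)
          + ((\<Sum>y\<in>I. cnj (v y) * M y x * s) + quad_form I M v)"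
      using \<open>finite I\<close> \<open>x \<notin> I\<close>
      by (simp add: quad_form_def upd fun_upd_same sum.distrib add_ac del: fun_upd_apply)
    also have "\<dots> = cnj s * M x x * s + cnj s * w + cnj w * s + quad_form I M v"
      using row[symmetric] by (simp add: w_def sum_distrib_left sum_distrib_right mult.assoc)
    also have "\<dots> = quad_form I M v - cnj w * w / M x x"
    proof -
      have "cnj (M x x) = M x x"
        using psd_on_diag_nonneg[OF psd fin] by (simp add: less_eq_complex_def complex_eq_iff)
      then show ?thesis
        using False by (simp add: s_def field_simps)
    qed
    also have "cnj w * w / M x x = (\<Sum>a\<in>I. \<Sum>b\<in>I. cnj (v a) * (cnj (M x a) * M x b / M x x) * v b)"
      by (simp add: w_def sum_distrib_left sum_distrib_right sum_divide_distrib mult_ac)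
    also have "quad_form I M v - \<dots> = quad_form I (\<lambda>u w. M u w - cnj (M x u) * M x w / M x x) v"
      by (simp add: quad_form_def right_diff_distrib left_diff_distrib sum_subtractf)
    finally show "0 \<le> quad_form I (\<lambda>u w. M u w - cnj (M x u) * M x w / M x x) v"
      using psd fin unfolding psd_on_iff_quad_form_nonneg by metis
  qed
qed

lemma psd_on_gram_insert:
  assumes psd: "psd_on (insert x I) M" and "finite I" "x \<notin> I"
    and f': "\<forall>u\<in>I. \<forall>w\<in>I. M u w - cnj (M x u) * M x w / M x x = cinner I (f' u) (f' w)"
  shows "\<exists>f. \<forall>u\<in>insert x I. \<forall>w\<in>insert x I. M u w = cinner (insert x I) (f u) (f w)"
proof -
  have fin: "finite (insert x I)"
    using \<open>finite I\<close> by simp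
  define r where "r = sqrt (Re (M x x))"
  have r: "of_real r * of_real r = M x x"
    using psd_on_diag_nonneg[OF psd fin] unfolding r_def
    by (simp add: less_eq_complex_def complex_eq_iff flip: of_real_mult)
  define f where "f u t = (if t = x then M x u / of_real r else if u = x then 0 else f' u t)" for u t
  have gram: "cinner (insert x I) (f u) (f w)
      = cnj (M x u) * M x w / M x x + (if u = x \<or> w = x then 0 else cinner I (f' u) (f' w))" for u w
  proof -
    have "cinner (insert x I) (f u) (f w) = cnj (M x u) * M x w / M x x + cinner I (f u) (f w)"
      using assms(2,3) by (simp add: cinner_def f_def flip: r)
    also have "cinner I (f u) (f w) = (if u = x \<or> w = x then 0 else cinner I (f' u) (f' w))"
      using assms(3) unfolding cinner_def f_def by (auto intro!: sum.neutral sum.cong)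
    finally show ?thesis .
  qed
  have real: "cnj (M x x) = M x x"
    using psd_on_diag_nonneg[OF psd fin] by (simp add: less_eq_complex_def complex_eq_iff)
  have row: "M x y = 0" if "M x x = 0" "y \<in> insert x I" for y
    using psd_on_diag_zero[OF psd fin _ that(2) that(1)] by simp
  have "M x w = cinner (insert x I) (f x) (f w)" if "w \<in> insert x I" for w
    using that row[OF _ that] by (cases "M x x = 0") (simp_all add: gram real)
  moreover have "M u x = cinner (insert x I) (f u) (f x)" if "u \<in> I" for u
    using psd_on_hermitian[OF psd fin, of x u] row[of u] assms(3) that
    by (cases "M x x = 0") (simp_all add: gram mult.commute)
  moreover have "M u w = cinner (insert x I) (f u) (f w)" if "u \<in> I" "w \<in> I" for u w
  proof -
    have "u \<noteq> x" "w \<noteq> x"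
      using that assms(3) by auto
    moreover have "M u w - cnj (M x u) * M x w / M x x = cinner I (f' u) (f' w)"
      using that f' by blast
    ultimately show ?thesis
      by (simp add: gram diff_eq_eq add.commute)
  qed
  ultimately show ?thesis
    by (intro exI[of _ f]) blast
qed

lemma psd_on_gram_factorization:
  assumes "finite I" "psd_on I M"
  shows "\<exists>f. \<forall>x\<in>I. \<forall>y\<in>I. M x y = cinner I (f x) (f y)"
  using assms
proof (induction I arbitrary: M rule: finite_induct)
  case empty
  then show ?case by simp
next
  case (insert x I)
  then obtain f' where "\<forall>u\<in>I. \<forall>w\<in>I. M u w - cnj (M x u) * M x w / M x x = cinner I (f' u) (f' w)"
    using psd_on_schur_complement[OF insert.prems insert.hyps] by blast
  then show ?case
    using psd_on_gram_insert[OF insert.prems insert.hyps] by blast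
qed

section \<open>Matrices bounded below by a multiple of the identity\<close>

definition psd_ge :: "real \<Rightarrow> 'i set \<Rightarrow> ('i \<Rightarrow> 'i \<Rightarrow> complex) \<Rightarrow> bool" where
  "psd_ge \<eta> I M \<longleftrightarrow> psd_on I (\<lambda>x y. M x y - of_real \<eta> * (if x = y then 1 else 0))"

lemma psd_on_imp_psd_ge_add_diag:
  "psd_on I M \<Longrightarrow> psd_ge \<eta> I (\<lambda>x y. M x y + of_real \<eta> * (if x = y then 1 else 0))"
  unfolding psd_ge_def by (erule psd_on_cong) simp

lemma psd_ge_reindex:
  assumes "psd_ge \<eta> J M" "finite J" "f ` I \<subseteq> J" "inj_on f I"
  shows "psd_ge \<eta> I (\<lambda>x y. M (f x) (f y))"
  unfolding psd_ge_def
  by (rule psd_on_cong[OF psd_on_reindex[OF assms(1)[unfolded psd_ge_def] assms(2-4)]])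
     (use assms(4) in \<open>auto dest: inj_onD\<close>)

lemma quad_form_diff_diag:
  assumes "finite I"
  shows "quad_form I (\<lambda>x y. M x y - c * (if x = y then 1 else 0)) v = quad_form I M v - c * cinner I v v"
proof -
  have "(\<Sum>y\<in>I. cnj (v x) * (c * (if x = y then 1 else 0)) * v y) = c * (cnj (v x) * v x)"
    if "x \<in> I" for x
  proof -
    have "cnj (v x) * (c * (if x = y then 1 else 0)) * v y = (if x = y then c * (cnj (v x) * v x) else 0)"
      for y
      by simp
    then show ?thesis
      using assms that by simp
  qed
  then show ?thesis
    unfolding quad_form_def cinner_def
    by (simp add: right_diff_distrib left_diff_distrib sum_subtractf sum_distrib_left)
qed

lemma psd_ge_lower_bound:
  assumes "psd_ge \<eta> I M" "finite I"
  shows "of_real \<eta> * cinner I v v \<le> quad_form I M v"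
proof -
  have "0 \<le> quad_form I (\<lambda>x y. M x y - of_real \<eta> * (if x = y then 1 else 0)) v"
    using assms(1) unfolding psd_ge_def psd_on_iff_quad_form_nonneg by blast
  then show ?thesis
    unfolding quad_form_diff_diag[OF assms(2)] by simp
qed

lemma psd_ge_imp_psd_on:
  assumes "psd_ge \<eta> I M" "finite I" "0 \<le> \<eta>"
  shows "psd_on I M"
  unfolding psd_on_iff_quad_form_nonneg
proof
  fix v
  have "0 \<le> of_real \<eta> * cinner I v v"
    using assms(3) cinner_self_nonneg[of I v] by (simp add: less_eq_complex_def)
  also have "\<dots> \<le> quad_form I M v"
    using psd_ge_lower_bound[OF assms(1,2)] .
  finally show "0 \<le> quad_form I M v" .
qed

lemma psd_ge_mult_vec_eq_0:
  fixes k :: nat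
  assumes "psd_ge \<eta> {..<k} A" "0 < \<eta>" "\<forall>i<k. (\<Sum>j<k. A i j * v j) = 0"
  shows "\<forall>i<k. v i = 0"
proof -
  have "quad_form {..<k} A v = 0"
    unfolding quad_form_def using assms(3) by (simp add: mult.assoc flip: sum_distrib_left)
  then have "of_real \<eta> * cinner {..<k} v v \<le> 0"
    using psd_ge_lower_bound[OF assms(1) finite_lessThan, of v] by simp
  then have "cinner {..<k} v v = 0"
    using cinner_self_nonneg[of "{..<k}" v] assms(2)
    by (auto simp: less_eq_complex_def complex_eq_iff mult_le_0_iff)
  then show ?thesis
    by (simp add: cinner_self_eq_0_iff)
qed

lemma psd_ge_solvable:
  fixes k :: nat
  assumes "psd_ge \<eta> {..<k} A" "0 < \<eta>"
  shows "\<exists>c. \<forall>i<k. \<forall>j<k. (\<Sum>t<k. A i t * c t j) = B i j"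
proof -
  define A' where "A' = mat k k (\<lambda>(i, j). A i j)"
  define B' where "B' = mat k k (\<lambda>(i, j). B i j)"
  have A': "A' \<in> carrier_mat k k" and B': "B' \<in> carrier_mat k k"
    unfolding A'_def B'_def by simp_all
  have "det A' \<noteq> 0"
  proof
    assume "det A' = 0"
    then obtain v where v: "v \<in> carrier_vec k" "v \<noteq> 0\<^sub>v k" "A' *\<^sub>v v = 0\<^sub>v k"
      using det_0_iff_vec_prod_zero_field[OF A'] by blast
    have "(\<Sum>j<k. A i j * v $ j) = 0" if "i < k" for i
      using v(1) arg_cong[OF v(3), of "\<lambda>u. u $ i"] that
      by (simp add: A'_def scalar_prod_def lessThan_atLeast0)
    then have "\<forall>i<k. v $ i = 0"
      using psd_ge_mult_vec_eq_0[OF assms] by blast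
    then show False
      using v(1,2) by (metis carrier_vecD eq_vecI index_zero_vec(1,2))
  qed
  then obtain P where P: "P \<in> carrier_mat k k" "A' * P = 1\<^sub>m k"
    using det_non_zero_imp_unit[OF A'] unfolding Units_def ring_mat_def by auto
  define C where "C = P * B'"
  have C: "C \<in> carrier_mat k k"
    using P B' by (simp add: C_def)
  have "A' * C = B'"
    using A' B' P by (simp add: C_def flip: assoc_mult_mat)
  show ?thesis
  proof (intro exI[of _ "\<lambda>t j. C $$ (t, j)"] allI impI)
    fix i j assume "i < k" "j < k"
    then have "(A' * C) $$ (i, j) = B i j"
      using \<open>A' * C = B'\<close> by (simp add: B'_def)
    then show "(\<Sum>t<k. A i t * C $$ (t, j)) = B i j"
      using \<open>i < k\<close> \<open>j < k\<close> C by (simp add: A'_def scalar_prod_def lessThan_atLeast0)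
  qed
qed

section \<open>Positive extension of Toeplitz block matrices\<close>

text \<open>
  The family z is the image of y under an isometry extending x i \<mapsto> y i: the projection p j of
  y j onto the span of the x i is sent to the corresponding combination q j of the y i, and the
  orthogonal rest y j - p j to a fresh copy of the space.
\<close>

lemma gram_shift_extension:
  fixes x y :: "nat \<Rightarrow> 't \<Rightarrow> complex" and k :: nat
  assumes "finite T" "0 < \<eta>" "psd_ge \<eta> {..<k} (\<lambda>i j. cinner T (x i) (x j))"
    and yy: "\<forall>i<k. \<forall>j<k. cinner T (y i) (y j) = cinner T (x i) (x j)"
  shows "\<exists>z. \<forall>i<k. \<forall>j<k.
           cinner (T <+> T) (case_sum (y i) (\<lambda>_. 0)) (z j) = cinner T (x i) (y j) \<and>
           cinner (T <+> T) (z i) (z j) = cinner T (x i) (x j)"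
proof -
  obtain c where c: "\<forall>i<k. \<forall>j<k. (\<Sum>m<k. cinner T (x i) (x m) * c m j) = cinner T (x i) (y j)"
    using psd_ge_solvable[OF assms(3,2), of "\<lambda>i j. cinner T (x i) (y j)"] by blast
  define p where "p j = (\<lambda>t. \<Sum>m<k. c m j * x m t)" for j
  define q where "q j = (\<lambda>t. \<Sum>m<k. c m j * y m t)" for j
  have xp: "cinner T (x i) (p j) = cinner T (x i) (y j)" if "i < k" "j < k" for i j
    using c that by (simp add: p_def cinner_sum_right cinner_scale_right mult.commute)
  have yq: "cinner T (y i) (q j) = cinner T (x i) (y j)" if "i < k" "j < k" for i j
    using c yy that by (simp add: q_def cinner_sum_right cinner_scale_right mult.commute)
  have qq: "cinner T (q i) (q j) = cinner T (p i) (p j)" if "i < k" "j < k" for i j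
    using yy by (simp add: p_def q_def cinner_sum_left cinner_sum_right cinner_scale_left cinner_scale_right)
  have py: "cinner T (p i) (y j) = cinner T (p i) (p j)" if "i < k" "j < k" for i j
    using xp that by (simp add: p_def cinner_sum_left cinner_scale_left)
  have yp: "cinner T (y i) (p j) = cinner T (p i) (p j)" if "i < k" "j < k" for i j
    using py[OF that(2,1)] cinner_commute[of T "y i" "p j"] cinner_commute[of T "p j" "p i"] by simp
  show ?thesis
  proof (intro exI[of _ "\<lambda>j. case_sum (q j) (\<lambda>t. y j t - p j t)"] allI impI conjI)
    fix i j assume "i < k" "j < k"
    then show "cinner (T <+> T) (case_sum (y i) (\<lambda>_. 0)) (case_sum (q j) (\<lambda>t. y j t - p j t))
        = cinner T (x i) (y j)"
      using \<open>finite T\<close> by (simp add: cinner_Plus yq cinner_zero_left)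
    show "cinner (T <+> T) (case_sum (q i) (\<lambda>t. y i t - p i t)) (case_sum (q j) (\<lambda>t. y j t - p j t))
        = cinner T (x i) (x j)"
      using \<open>finite T\<close> \<open>i < k\<close> \<open>j < k\<close> yy
      by (simp add: cinner_Plus cinner_diff_left cinner_diff_right qq py yp)
  qed
qed

lemma cinner_toeplitz3:
  assumes "i < k" "j < k" "r < 3" "r' < 3"
    and "\<And>i j. i < k \<Longrightarrow> j < k \<Longrightarrow> cinner T (G i 1) (G j 1) = cinner T (G i 0) (G j 0)"
    and "\<And>i j. i < k \<Longrightarrow> j < k \<Longrightarrow> cinner T (G i 2) (G j 2) = cinner T (G i 0) (G j 0)"
    and "\<And>i j. i < k \<Longrightarrow> j < k \<Longrightarrow> cinner T (G i 1) (G j 2) = cinner T (G i 0) (G j 1)"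
  shows "cinner T (G i r) (G j r') = cinner T (G i (nat (int r - int r'))) (G j (nat (int r' - int r)))"
proof -
  have "cinner T (G i 2) (G j 1) = cinner T (G i 1) (G j 0)"
    using assms(7)[OF assms(2,1)] cinner_commute by metis
  moreover have "r = 0 \<or> r = 1 \<or> r = 2" "r' = 0 \<or> r' = 1 \<or> r' = 2"
    using assms(3,4) by auto
  ultimately show ?thesis
    using assms(1,2,5-7) unfolding One_nat_def by (elim disjE) simp_all
qed

lemma toeplitz_block_gram_vectors:
  fixes a :: "nat \<Rightarrow> nat \<Rightarrow> nat \<Rightarrow> nat \<Rightarrow> complex" and k :: nat
  assumes pd: "psd_ge \<eta> ({..<k} \<times> {..<2}) (\<lambda>(i, r) (j, r'). a i j r r')" and "0 < \<eta>"
    and toep: "\<forall>i<k. \<forall>j<k. a i j 1 1 = a i j 0 0"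
  shows "\<exists>(S :: ((nat \<times> nat) + (nat \<times> nat)) set) G. \<forall>i<k. \<forall>j<k.
           (\<forall>r<2. \<forall>r'<2. cinner S (G i r) (G j r') = a i j r r') \<and>
           cinner S (G i 1) (G j 2) = a i j 0 1 \<and> cinner S (G i 2) (G j 2) = a i j 0 0"
proof -
  let ?T = "{..<k} \<times> {..<2::nat}"
  obtain f where f: "\<forall>x\<in>?T. \<forall>y\<in>?T. (\<lambda>(i, r) (j, r'). a i j r r') x y = cinner ?T (f x) (f y)"
    using psd_on_gram_factorization[OF _ psd_ge_imp_psd_on[OF pd]] \<open>0 < \<eta>\<close> by fastforce
  have gram_f: "cinner ?T (f (i, r)) (f (j, r')) = a i j r r'" if "i < k" "j < k" "r < 2" "r' < 2"
    for i j r r'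
    using f that by fastforce
  have "psd_ge \<eta> {..<k} (\<lambda>i j. a i j 0 0)"
    by (rule psd_ge_reindex[OF pd, of "\<lambda>i. (i, 0)", simplified]) (auto simp: inj_on_def)
  then have "psd_ge \<eta> {..<k} (\<lambda>i j. cinner ?T (f (i, 0)) (f (j, 0)))"
    unfolding psd_ge_def by (rule psd_on_cong) (simp add: gram_f)
  then obtain z where "\<forall>i<k. \<forall>j<k.
        cinner (?T <+> ?T) (case_sum (f (i, 1)) (\<lambda>_. 0)) (z j) = cinner ?T (f (i, 0)) (f (j, 1)) \<and>
        cinner (?T <+> ?T) (z i) (z j) = cinner ?T (f (i, 0)) (f (j, 0))"
    using gram_shift_extension[of ?T \<eta> k "\<lambda>i. f (i, 0)" "\<lambda>i. f (i, 1)"] \<open>0 < \<eta>\<close> toep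
    by (auto simp: gram_f)
  then show ?thesis
    by (intro exI[of _ "?T <+> ?T"] exI[of _ "\<lambda>i r. if r < 2 then case_sum (f (i, r)) (\<lambda>_. 0) else z i"])
       (simp add: cinner_Plus cinner_zero_left gram_f)
qed

lemma toeplitz_block_extension:
  fixes a :: "nat \<Rightarrow> nat \<Rightarrow> nat \<Rightarrow> nat \<Rightarrow> complex" and k :: nat
  assumes pd: "psd_ge \<eta> ({..<k} \<times> {..<2}) (\<lambda>(i, r) (j, r'). a i j r r')" and "0 < \<eta>"
    and toep: "\<forall>i<k. \<forall>j<k. a i j 1 1 = a i j 0 0"
  shows "\<exists>t. psd_on ({..<k} \<times> {..<3}) (\<lambda>(i, r) (j, r'). t i j (int r - int r')) \<and>
             (\<forall>i<k. \<forall>j<k. \<forall>r<2. \<forall>r'<2. t i j (int r - int r') = a i j r r')"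
proof -
  obtain S :: "((nat \<times> nat) + (nat \<times> nat)) set" and G where G: "\<forall>i<k. \<forall>j<k.
      (\<forall>r<2. \<forall>r'<2. cinner S (G i r) (G j r') = a i j r r') \<and>
      cinner S (G i 1) (G j 2) = a i j 0 1 \<and> cinner S (G i 2) (G j 2) = a i j 0 0"
    using toeplitz_block_gram_vectors[OF assms] by blast
  define t where "t i j d = cinner S (G i (nat d)) (G j (nat (- d)))" for i j d
  have rel: "cinner S (G i 1) (G j 1) = cinner S (G i 0) (G j 0)"
    "cinner S (G i 2) (G j 2) = cinner S (G i 0) (G j 0)"
    "cinner S (G i 1) (G j 2) = cinner S (G i 0) (G j 1)"
    if "i < k" "j < k" for i j
    using G toep that by simp_all
  have toeplitz: "cinner S (G i r) (G j r') = t i j (int r - int r')"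
    if "i < k" "j < k" "r < 3" "r' < 3" for i j r r'
    using cinner_toeplitz3[where G = G and T = S, OF that rel] by (simp add: t_def)
  show ?thesis
  proof (intro exI[of _ t] conjI allI impI)
    show "psd_on ({..<k} \<times> {..<3}) (\<lambda>(i, r) (j, r'). t i j (int r - int r'))"
      by (rule psd_on_cong[OF psd_on_gram[of _ S "\<lambda>(i, r). G i r"]]) (auto simp: toeplitz)
    fix i j r r' :: nat
    assume "i < k" "j < k" "r < 2" "r' < 2"
    then show "t i j (int r - int r') = a i j r r'"
      using G by (simp flip: toeplitz)
  qed
qed

section \<open>The separating functional\<close>

definition tensor_compress ::
  "nat \<Rightarrow> nat \<Rightarrow> (nat \<Rightarrow> nat \<Rightarrow> nat \<Rightarrow> nat \<Rightarrow> complex) \<Rightarrow> (nat \<Rightarrow> nat \<Rightarrow> nat \<Rightarrow> nat \<Rightarrow> complex)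
    \<Rightarrow> (nat \<times> nat \<Rightarrow> nat \<Rightarrow> complex) \<Rightarrow> nat \<Rightarrow> nat \<Rightarrow> nat \<Rightarrow> nat \<Rightarrow> nat \<Rightarrow> nat \<Rightarrow> complex" where
  "tensor_compress k l a b \<delta> i j r s r' s' =
     (\<Sum>i1<k. \<Sum>j1<l. \<Sum>i2<k. \<Sum>j2<l. cnj (\<delta> (i1, j1) i) * (a i1 i2 r r' * b j1 j2 s s') * \<delta> (i2, j2) j)"

lemma psd_on_tensor_compress:
  fixes R S P :: "nat set"
  assumes "psd_on ({..<k} \<times> R) (\<lambda>(i, r) (i', r'). a i i' r r')" "finite R"
    and "psd_on ({..<l} \<times> S) (\<lambda>(j, s) (j', s'). b j j' s s')" "finite S"
  shows "psd_on (P \<times> R \<times> S) (\<lambda>(p, r, s) (p', r', s'). tensor_compress k l a b \<delta> p p' r s r' s')"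
proof -
  obtain f where f: "\<forall>x\<in>{..<k} \<times> R. \<forall>y\<in>{..<k} \<times> R.
      (\<lambda>(i, r) (i', r'). a i i' r r') x y = cinner ({..<k} \<times> R) (f x) (f y)"
    using psd_on_gram_factorization[OF _ assms(1)] assms(2) by blast
  obtain g where g: "\<forall>x\<in>{..<l} \<times> S. \<forall>y\<in>{..<l} \<times> S.
      (\<lambda>(j, s) (j', s'). b j j' s s') x y = cinner ({..<l} \<times> S) (g x) (g y)"
    using psd_on_gram_factorization[OF _ assms(3)] assms(4) by blast
  let ?T = "({..<k} \<times> R) \<times> ({..<l} \<times> S)"
  define u where "u i j r s = (\<lambda>(ta, tb). f (i, r) ta * g (j, s) tb)" for i j r s
  define F where "F = (\<lambda>(p, r, s) t. \<Sum>i<k. \<Sum>j<l. \<delta> (i, j) p * u i j r s t)"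
  have u: "cinner ?T (u i j r s) (u i' j' r' s') = a i i' r r' * b j j' s s'"
    if "i < k" "j < l" "i' < k" "j' < l" "r \<in> R" "s \<in> S" "r' \<in> R" "s' \<in> S" for i j i' j' r s r' s'
    using f g that unfolding u_def by (simp add: cinner_times)
  have "cinner ?T (F (p, r, s)) (F (p', r', s')) = tensor_compress k l a b \<delta> p p' r s r' s'"
    if "r \<in> R" "s \<in> S" "r' \<in> R" "s' \<in> S" for p r s p' r' s'
    using that
    by (simp add: F_def cinner_sum_left cinner_sum_right cinner_scale_left cinner_scale_right u
        tensor_compress_def sum_distrib_left mult_ac)
  then show ?thesis
    by (intro psd_on_cong[OF psd_on_gram[of _ ?T F]]) auto
qed

definition separating_functional :: "(nat \<Rightarrow> nat \<Rightarrow> nat \<Rightarrow> nat \<Rightarrow> nat \<Rightarrow> nat \<Rightarrow> complex) \<Rightarrow> complex" where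
  "separating_functional Z =
     3 * (Z 0 0 0 0 0 0 + Z 1 1 0 0 0 0) + Z 1 0 0 0 1 1 - Z 0 1 0 0 1 1 - Z 1 0 1 1 0 0 + Z 0 1 1 1 0 0
     - Z 1 0 0 1 1 0 - Z 0 1 0 1 1 0 - Z 1 0 1 0 0 1 - Z 0 1 1 0 0 1"

lemma separating_functional_nonneg:
  fixes Z :: "nat \<Rightarrow> nat \<Rightarrow> nat \<Rightarrow> nat \<Rightarrow> nat \<Rightarrow> nat \<Rightarrow> complex"
  assumes psd: "psd_on ({..<2} \<times> {..<3} \<times> {..<3}) (\<lambda>(i, r, s) (j, r', s'). Z i j r s r' s')"
    and toep: "\<forall>i<2. \<forall>j<2. \<forall>r<3. \<forall>s<3. \<forall>r'<3. \<forall>s'<3.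
                 Z i j r s r' s' = T i j (int r - int r') (int s - int s')"
  shows "0 \<le> separating_functional Z"
proof -
  let ?Z = "\<lambda>(i, r, s) (j, r', s'). Z i j r s r' s'"
  have nonneg: "0 \<le> quad_form S ?Z v" if "S \<subseteq> {..<2} \<times> {..<3} \<times> {..<3}" for S v
    using psd_on_subset[OF psd _ that] unfolding psd_on_iff_quad_form_nonneg by simp
  have Z: "Z i j r s r' s' = T i j (int r - int r') (int s - int s')"
    if "i < 2" "j < 2" "r < 3" "s < 3" "r' < 3" "s' < 3" for i j r s r' s'
    using toep that by blast
  define w0 :: "nat \<times> nat \<times> nat \<Rightarrow> complex" where
    "w0 x = (if x = (0, 1, 1) then 3 else if x = (1, 0, 0) then 1 else - 1)" for x
  define w1 :: "nat \<times> nat \<times> nat \<Rightarrow> complex" where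
    "w1 x = (if x = (1, 1, 1) then 3 else if x = (0, 2, 2) then 1 else - 1)" for x
  define w2 :: "nat \<times> nat \<times> nat \<Rightarrow> complex" where
    "w2 x = (if x = (0, 2, 0) \<or> x = (1, 2, 0) then - 1 else 1)" for x
  \<comment> \<open>Each vector matters only on the support of its quadratic form, so w2 serves six of them.\<close>
  have "6 * separating_functional Z =
      quad_form {(1, 0, 0), (1, 0, 2), (0, 1, 1), (1, 2, 0), (1, 2, 2)} ?Z w0
    + quad_form {(0, 0, 0), (0, 0, 2), (1, 1, 1), (0, 2, 0), (0, 2, 2)} ?Z w1
    + quad_form {(0, 1, 1)} ?Z w2 + quad_form {(1, 1, 1)} ?Z w2
    + quad_form {(0, 0, 0), (0, 2, 2)} ?Z w2 + quad_form {(1, 0, 0), (1, 2, 2)} ?Z w2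
    + quad_form {(0, 0, 2), (0, 2, 0)} ?Z w2 + quad_form {(1, 0, 2), (1, 2, 0)} ?Z w2"
    by (simp add: separating_functional_def quad_form_def Z w0_def w1_def w2_def)
  also have "0 \<le> \<dots>"
    by (intro add_nonneg_nonneg nonneg) auto
  finally show ?thesis
    by (simp add: less_eq_complex_def)
qed

lemma separating_functional_cong:
  assumes "\<And>i j r s r' s'. i < 2 \<Longrightarrow> j < 2 \<Longrightarrow> r < 2 \<Longrightarrow> s < 2 \<Longrightarrow> r' < 2 \<Longrightarrow> s' < 2 \<Longrightarrow>
             Z i j r s r' s' = Z' i j r s r' s'"
  shows "separating_functional Z = separating_functional Z'"
  unfolding separating_functional_def by (simp add: assms)

lemma separating_functional_shift_diag:
  "separating_functional (\<lambda>i j \<rho> \<sigma> \<rho>' \<sigma>'. c * of_bool (i = j \<and> \<rho> = \<rho>' \<and> \<sigma> = \<sigma>') + Z i j \<rho> \<sigma> \<rho>' \<sigma>')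
     = 6 * c + separating_functional Z"
  by (simp add: separating_functional_def algebra_simps)

lemma separating_functional_tensor_compress_nonneg_psd_ge:
  assumes a: "psd_ge \<eta> ({..<k} \<times> {..<2}) (\<lambda>(i, r) (i', r'). a i i' r r')"
    and b: "psd_ge \<eta> ({..<l} \<times> {..<2}) (\<lambda>(j, s) (j', s'). b j j' s s')" and "0 < \<eta>"
    and toep_a: "\<forall>i<k. \<forall>i'<k. a i i' 1 1 = a i i' 0 0"
    and toep_b: "\<forall>j<l. \<forall>j'<l. b j j' 1 1 = b j j' 0 0"
  shows "0 \<le> separating_functional (tensor_compress k l a b \<delta>)"
proof -
  obtain ta where ta: "psd_on ({..<k} \<times> {..<3}) (\<lambda>(i, r) (i', r'). ta i i' (int r - int r'))"
    "\<forall>i<k. \<forall>i'<k. \<forall>r<2. \<forall>r'<2. ta i i' (int r - int r') = a i i' r r'"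
    using toeplitz_block_extension[OF a \<open>0 < \<eta>\<close> toep_a] by blast
  obtain tb where tb: "psd_on ({..<l} \<times> {..<3}) (\<lambda>(j, s) (j', s'). tb j j' (int s - int s'))"
    "\<forall>j<l. \<forall>j'<l. \<forall>s<2. \<forall>s'<2. tb j j' (int s - int s') = b j j' s s'"
    using toeplitz_block_extension[OF b \<open>0 < \<eta>\<close> toep_b] by blast
  define Z where "Z = tensor_compress k l (\<lambda>i i' r r'. ta i i' (int r - int r'))
                                         (\<lambda>j j' s s'. tb j j' (int s - int s')) \<delta>"
  define T where "T i j d e = (\<Sum>i1<k. \<Sum>j1<l. \<Sum>i2<k. \<Sum>j2<l.
      cnj (\<delta> (i1, j1) i) * (ta i1 i2 d * tb j1 j2 e) * \<delta> (i2, j2) j)" for i j d e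
  have "0 \<le> separating_functional Z"
  proof (rule separating_functional_nonneg)
    show "psd_on ({..<2} \<times> {..<3} \<times> {..<3}) (\<lambda>(i, r, s) (j, r', s'). Z i j r s r' s')"
      unfolding Z_def using psd_on_tensor_compress[OF ta(1) _ tb(1)] by simp
    show "\<forall>i<2. \<forall>j<2. \<forall>r<3. \<forall>s<3. \<forall>r'<3. \<forall>s'<3.
        Z i j r s r' s' = T i j (int r - int r') (int s - int s')"
      by (simp add: Z_def T_def tensor_compress_def)
  qed
  also have "separating_functional Z = separating_functional (tensor_compress k l a b \<delta>)"
    by (rule separating_functional_cong) (simp add: Z_def tensor_compress_def ta(2) tb(2))
  finally show ?thesis .
qed

text \<open>
  The extension needs positive definiteness, so a and b are first shifted by \<eta> I; the value
  of the functional is continuous in \<eta>.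
\<close>

lemma separating_functional_tensor_compress_nonneg:
  assumes a: "psd_on ({..<k} \<times> {..<2}) (\<lambda>(i, r) (i', r'). a i i' r r')"
    and b: "psd_on ({..<l} \<times> {..<2}) (\<lambda>(j, s) (j', s'). b j j' s s')"
    and toep_a: "\<forall>i<k. \<forall>i'<k. a i i' 1 1 = a i i' 0 0"
    and toep_b: "\<forall>j<l. \<forall>j'<l. b j j' 1 1 = b j j' 0 0"
  shows "0 \<le> Re (separating_functional (tensor_compress k l a b \<delta>))"
proof -
  define shift where
    "shift c \<eta> i i' r r' = c i i' r r' + of_real \<eta> * (if i = i' \<and> r = r' then 1 else 0)"
    for c :: "nat \<Rightarrow> nat \<Rightarrow> nat \<Rightarrow> nat \<Rightarrow> complex" and \<eta> :: real and i i' r r'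
  define F where "F \<eta> = Re (separating_functional (tensor_compress k l (shift a \<eta>) (shift b \<eta>) \<delta>))" for \<eta>
  have shift_pd: "psd_ge \<eta> ({..<n} \<times> {..<2}) (\<lambda>(i, r) (i', r'). shift c \<eta> i i' r r')"
    if "psd_on ({..<n} \<times> {..<2}) (\<lambda>(i, r) (i', r'). c i i' r r')" for n c \<eta>
    using psd_on_imp_psd_ge_add_diag[OF that, of \<eta>]
    unfolding psd_ge_def by (rule psd_on_cong) (auto simp: shift_def split: if_splits)
  have "0 \<le> F \<eta>" if "0 < \<eta>" for \<eta>
  proof -
    have "0 \<le> separating_functional (tensor_compress k l (shift a \<eta>) (shift b \<eta>) \<delta>)"
      by (rule separating_functional_tensor_compress_nonneg_psd_ge[OF shift_pd[OF a] shift_pd[OF b] that])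
         (use toep_a toep_b in \<open>simp_all add: shift_def\<close>)
    then show ?thesis
      by (simp add: F_def less_eq_complex_def)
  qed
  then have nonneg: "eventually (\<lambda>\<eta>. 0 \<le> F \<eta>) (at_right 0)"
    by (intro eventually_at_rightI[of 0 1]) auto
  have "continuous_on UNIV F"
    unfolding F_def separating_functional_def tensor_compress_def shift_def by (intro continuous_intros)
  then have "(F \<longlongrightarrow> F 0) (at_right 0)"
    by (simp add: continuous_on_def filterlim_at_split)
  then have "0 \<le> F 0"
    using nonneg by (rule tendsto_lowerbound) simp
  moreover have "shift c 0 = c" for c
    by (simp add: fun_eq_iff shift_def)
  ultimately show ?thesis
    by (simp add: F_def)
qed

section \<open>Elements of the Toeplitz tensor product\<close>

lemma div_mod_less_of_less_mult:
  fixes q K L :: nat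
  assumes "q < K * L"
  shows "q div L < K" "q mod L < L"
  using assms by (cases "L = 0"; simp add: less_mult_imp_div_less)+

lemma mult_add_less_mult:
  fixes \<alpha> \<beta> K L :: nat
  shows "\<alpha> < K \<Longrightarrow> \<beta> < L \<Longrightarrow> \<alpha> * L + \<beta> < K * L"
  using mult_le_mono1[of "Suc \<alpha>" K L] by auto

lemma sum_lessThan_mult_div_mod:
  fixes K L :: nat
  shows "(\<Sum>q<K * L. f (q div L) (q mod L)) = (\<Sum>\<alpha><K. \<Sum>\<beta><L. f \<alpha> \<beta>)"
proof -
  have "(\<Sum>q<K * L. f (q div L) (q mod L)) = (\<Sum>(\<alpha>, \<beta>)\<in>{..<K} \<times> {..<L}. f \<alpha> \<beta>)"
    by (rule sum.reindex_bij_witness[of _ "\<lambda>(\<alpha>, \<beta>). \<alpha> * L + \<beta>" "\<lambda>q. (q div L, q mod L)"])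
       (auto simp: div_mod_less_of_less_mult mult_add_less_mult)
  then show ?thesis
    by (simp add: sum.cartesian_product)
qed

lemma toeplitz_scale: "toeplitz n A \<Longrightarrow> toeplitz n (\<lambda>r r'. c * A r r')"
  unfolding toeplitz_def by metis

lemma in_toep_tensor_double_sum:
  fixes K L :: nat
  assumes "\<forall>\<alpha><K. toeplitz n (A \<alpha>)" "\<forall>\<beta><L. toeplitz m (B \<beta>)"
  shows "in_toep_tensor n m (\<lambda>(r, s) (r', s'). \<Sum>\<alpha><K. \<Sum>\<beta><L. c \<alpha> \<beta> * A \<alpha> r r' * B \<beta> s s')"
  unfolding in_toep_tensor_def
proof (rule exI[of _ "K * L"], rule exI[of _ "\<lambda>q r r'. c (q div L) (q mod L) * A (q div L) r r'"],
    rule exI[of _ "\<lambda>q. B (q mod L)"], intro conjI allI impI)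
  fix q assume "q < K * L"
  then show "toeplitz n (\<lambda>r r'. c (q div L) (q mod L) * A (q div L) r r')"
    and "toeplitz m (B (q mod L))"
    using assms div_mod_less_of_less_mult by (auto intro: toeplitz_scale)
next
  fix r r' s s' :: nat
  show "(\<lambda>(r, s) (r', s'). \<Sum>\<alpha><K. \<Sum>\<beta><L. c \<alpha> \<beta> * A \<alpha> r r' * B \<beta> s s') (r, s) (r', s')
      = (\<Sum>q<K * L. c (q div L) (q mod L) * A (q div L) r r' * B (q mod L) s s')"
    using sum_lessThan_mult_div_mod[where f = "\<lambda>\<alpha> \<beta>. c \<alpha> \<beta> * A \<alpha> r r' * B \<beta> s s'"] by simp
qed

lemma in_toep_tensor_cong:
  assumes "in_toep_tensor n m Y"
    and "\<And>r r' s s'. r < n \<Longrightarrow> r' < n \<Longrightarrow> s < m \<Longrightarrow> s' < m \<Longrightarrow> Y (r, s) (r', s') = Y' (r, s) (r', s')"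
  shows "in_toep_tensor n m Y'"
proof -
  from assms(1) obtain N :: nat and A B where AB: "\<forall>q<N. toeplitz n (A q) \<and> toeplitz m (B q)"
    and Y: "\<forall>r<n. \<forall>r'<n. \<forall>s<m. \<forall>s'<m. Y (r, s) (r', s') = (\<Sum>q<N. A q r r' * B q s s')"
    unfolding in_toep_tensor_def by blast
  have "\<forall>r<n. \<forall>r'<n. \<forall>s<m. \<forall>s'<m. Y' (r, s) (r', s') = (\<Sum>q<N. A q r r' * B q s s')"
    using Y assms(2) by simp
  with AB show ?thesis
    unfolding in_toep_tensor_def by blast
qed

text \<open>
  An index r < n lies in block corner_class n r at position corner_pos n r: the corners 0 and
  n - 1 form block 0 with positions 0 and 1, every other index is a block of its own. The
  Toeplitz units corner_unit n 0, 1, 2 are I, E(0, n - 1) and E(n - 1, 0), sitting at the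
  positions (0, 0), (0, 1) and (1, 0) of the corner block.
\<close>

definition corner_class :: "nat \<Rightarrow> nat \<Rightarrow> nat" where
  "corner_class n r = (if r = n - 1 then 0 else r)"

definition corner_pos :: "nat \<Rightarrow> nat \<Rightarrow> nat" where
  "corner_pos n r = (if r = n - 1 then 1 else 0)"

definition corner_unit :: "nat \<Rightarrow> nat \<Rightarrow> nat \<Rightarrow> nat \<Rightarrow> complex" where
  "corner_unit n \<alpha> r r' =
     (if \<alpha> = 0 \<and> r = r' \<or> \<alpha> = 1 \<and> r = 0 \<and> r' = n - 1 \<or> \<alpha> = 2 \<and> r = n - 1 \<and> r' = 0 then 1 else 0)"

lemma toeplitz_corner_unit: "toeplitz n (corner_unit n \<alpha>)"
  unfolding toeplitz_def corner_unit_def by auto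

lemma corner_unit_expansion:
  assumes "2 \<le> n" "r < n" "r' < n" "g 1 1 = g 0 0"
  shows "(\<Sum>\<alpha><3. g (of_bool (\<alpha> = 2)) (of_bool (\<alpha> = 1)) * corner_unit n \<alpha> r r')
       = (if corner_class n r = corner_class n r' then g (corner_pos n r) (corner_pos n r') else 0)"
  using assms by (auto simp: numeral_3_eq_3 corner_unit_def corner_class_def corner_pos_def)

lemma of_bool_less_2: "(of_bool b :: nat) < 2"
  by simp

lemma corner_pos_less_2: "corner_pos n r < 2"
  by (simp add: corner_pos_def)

lemma corner_spread_expansion:
  assumes "2 \<le> n" "2 \<le> m" "r < n" "r' < n" "s < m" "s' < m"
    and toep_row: "\<And>\<sigma> \<sigma>'. \<sigma> < 2 \<Longrightarrow> \<sigma>' < 2 \<Longrightarrow> G 1 \<sigma> 1 \<sigma>' = G 0 \<sigma> 0 \<sigma>'"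
    and toep_col: "\<And>\<rho> \<rho>'. \<rho> < 2 \<Longrightarrow> \<rho>' < 2 \<Longrightarrow> G \<rho> 1 \<rho>' 1 = G \<rho> 0 \<rho>' 0"
  shows "(\<Sum>\<alpha><3. \<Sum>\<beta><3. G (of_bool (\<alpha> = 2)) (of_bool (\<beta> = 2)) (of_bool (\<alpha> = 1)) (of_bool (\<beta> = 1))
            * corner_unit n \<alpha> r r' * corner_unit m \<beta> s s')
       = (if corner_class n r = corner_class n r' \<and> corner_class m s = corner_class m s'
          then G (corner_pos n r) (corner_pos m s) (corner_pos n r') (corner_pos m s') else 0)"
proof -
  have inner: "(\<Sum>\<beta><3. G \<rho> (of_bool (\<beta> = 2)) \<rho>' (of_bool (\<beta> = 1)) * corner_unit m \<beta> s s')
      = (if corner_class m s = corner_class m s' then G \<rho> (corner_pos m s) \<rho>' (corner_pos m s') else 0)"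
    if "\<rho> < 2" "\<rho>' < 2" for \<rho> \<rho>'
    using corner_unit_expansion[OF assms(2,5,6), of "\<lambda>\<sigma> \<sigma>'. G \<rho> \<sigma> \<rho>' \<sigma>'"] toep_col[OF that]
    by simp
  have "(\<Sum>\<alpha><3. \<Sum>\<beta><3. G (of_bool (\<alpha> = 2)) (of_bool (\<beta> = 2)) (of_bool (\<alpha> = 1)) (of_bool (\<beta> = 1))
            * corner_unit n \<alpha> r r' * corner_unit m \<beta> s s')
      = (\<Sum>\<alpha><3. (\<Sum>\<beta><3. G (of_bool (\<alpha> = 2)) (of_bool (\<beta> = 2)) (of_bool (\<alpha> = 1)) (of_bool (\<beta> = 1))
            * corner_unit m \<beta> s s') * corner_unit n \<alpha> r r')"
    by (simp only: sum_distrib_left sum_distrib_right mult.assoc mult.commute mult.left_commute)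
  also have "\<dots> = (\<Sum>\<alpha><3. (if corner_class m s = corner_class m s'
            then G (of_bool (\<alpha> = 2)) (corner_pos m s) (of_bool (\<alpha> = 1)) (corner_pos m s') else 0)
            * corner_unit n \<alpha> r r')"
    by (simp only: inner of_bool_less_2)
  also have "\<dots> = (if corner_class n r = corner_class n r' \<and> corner_class m s = corner_class m s'
          then G (corner_pos n r) (corner_pos m s) (corner_pos n r') (corner_pos m s') else 0)"
    using corner_unit_expansion[OF assms(1,3,4), of "\<lambda>\<rho> \<rho>'. G \<rho> (corner_pos m s) \<rho>' (corner_pos m s')"]
      toep_row[OF corner_pos_less_2 corner_pos_less_2] by (cases "corner_class m s = corner_class m s'") simp_all
  finally show ?thesis .
qed

section \<open>The witness\<close>

definition corner_vec :: "nat \<Rightarrow> nat \<Rightarrow> nat \<Rightarrow> nat \<Rightarrow> complex" where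
  "corner_vec i \<rho> \<sigma> \<kappa> =
     (if \<rho> = 0 \<and> \<sigma> = 0 then of_bool (\<kappa> = i)
      else if \<rho> = 1 \<and> \<sigma> = 0 then of_bool (\<kappa> = 3 - i)
      else if \<rho> = 0 \<and> \<sigma> = 1 then of_bool (\<kappa> = 2 + i)
      else if \<kappa> = 0 \<and> i = 1 then 1 else if \<kappa> = 1 \<and> i = 0 then - 1 else 0)"

definition corner_matrix :: "nat \<Rightarrow> nat \<Rightarrow> nat \<Rightarrow> nat \<Rightarrow> nat \<Rightarrow> nat \<Rightarrow> complex" where
  "corner_matrix i j \<rho> \<sigma> \<rho>' \<sigma>' = cinner {..<4} (corner_vec i \<rho> \<sigma>) (corner_vec j \<rho>' \<sigma>')"

definition corner_witness :: "nat \<Rightarrow> nat \<Rightarrow> nat \<Rightarrow> nat \<Rightarrow> nat \<times> nat \<Rightarrow> nat \<times> nat \<Rightarrow> complex" where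
  "corner_witness n m i j = (\<lambda>(r, s) (r', s').
     if corner_class n r = corner_class n r' \<and> corner_class m s = corner_class m s'
     then corner_matrix i j (corner_pos n r) (corner_pos m s) (corner_pos n r') (corner_pos m s') else 0)"

lemma corner_matrix_eq:
  "corner_matrix i j \<rho> \<sigma> \<rho>' \<sigma>' = (\<Sum>\<kappa>\<in>{0, 1, 2, 3}. cnj (corner_vec i \<rho> \<sigma> \<kappa>) * corner_vec j \<rho>' \<sigma>' \<kappa>)"
  unfolding corner_matrix_def cinner_def by (rule sum.cong) auto

lemma separating_functional_corner_matrix: "separating_functional corner_matrix = - 2"
  by (simp add: separating_functional_def corner_matrix_eq corner_vec_def)

lemma corner_matrix_toeplitz_row:
  assumes "i < 2" "j < 2" "\<sigma> < 2" "\<sigma>' < 2"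
  shows "corner_matrix i j 1 \<sigma> 1 \<sigma>' = corner_matrix i j 0 \<sigma> 0 \<sigma>'"
proof -
  have "i = 0 \<or> i = 1" "j = 0 \<or> j = 1" "\<sigma> = 0 \<or> \<sigma> = 1" "\<sigma>' = 0 \<or> \<sigma>' = 1"
    using assms by auto
  then show ?thesis
    by (auto simp: corner_matrix_eq corner_vec_def)
qed

lemma corner_matrix_toeplitz_col:
  assumes "i < 2" "j < 2" "\<rho> < 2" "\<rho>' < 2"
  shows "corner_matrix i j \<rho> 1 \<rho>' 1 = corner_matrix i j \<rho> 0 \<rho>' 0"
proof -
  have "i = 0 \<or> i = 1" "j = 0 \<or> j = 1" "\<rho> = 0 \<or> \<rho> = 1" "\<rho>' = 0 \<or> \<rho>' = 1"
    using assms by auto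
  then show ?thesis
    by (auto simp: corner_matrix_eq corner_vec_def)
qed

lemma corner_class_less: "r < n \<Longrightarrow> corner_class n r < n"
  by (simp add: corner_class_def)

lemma psd_on_corner_witness:
  "psd_on (P \<times> {..<n} \<times> {..<m}) (\<lambda>(i, r, s) (j, r', s'). corner_witness n m i j (r, s) (r', s'))"
proof -
  define F where "F = (\<lambda>(j, r, s). \<lambda>(\<kappa>, c). corner_vec j (corner_pos n r) (corner_pos m s) \<kappa>
                          * of_bool (c = (corner_class n r, corner_class m s)))"
  have "cinner ({..<4} \<times> ({..<n} \<times> {..<m})) (F x) (F y)
      = (\<lambda>(i, r, s) (j, r', s'). corner_witness n m i j (r, s) (r', s')) x y"
    if "x \<in> P \<times> {..<n} \<times> {..<m}" "y \<in> P \<times> {..<n} \<times> {..<m}" for x y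
    using that
    by (auto simp: F_def cinner_times cinner_indicator corner_class_less corner_witness_def corner_matrix_def)
  then show ?thesis
    by (intro psd_on_cong[OF psd_on_gram[of _ "{..<4} \<times> ({..<n} \<times> {..<m})" F]]) auto
qed

lemma corner_witness_in_toep_tensor:
  assumes "2 \<le> n" "2 \<le> m" "i < 2" "j < 2"
  shows "in_toep_tensor n m (corner_witness n m i j)"
proof -
  define C where "C \<alpha> \<beta> = corner_matrix i j (of_bool (\<alpha> = 2)) (of_bool (\<beta> = 2)) (of_bool (\<alpha> = 1)) (of_bool (\<beta> = 1))"
    for \<alpha> \<beta> :: nat
  have tensor: "in_toep_tensor n m
      (\<lambda>(r, s) (r', s'). \<Sum>\<alpha><3. \<Sum>\<beta><3. C \<alpha> \<beta> * corner_unit n \<alpha> r r' * corner_unit m \<beta> s s')"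
    by (rule in_toep_tensor_double_sum) (simp_all add: toeplitz_corner_unit)
  have expansion: "(\<Sum>\<alpha><3. \<Sum>\<beta><3. C \<alpha> \<beta> * corner_unit n \<alpha> r r' * corner_unit m \<beta> s s')
      = corner_witness n m i j (r, s) (r', s')" if "r < n" "r' < n" "s < m" "s' < m" for r r' s s'
    using corner_spread_expansion[where G = "corner_matrix i j", OF assms(1,2) that
        corner_matrix_toeplitz_row[OF assms(3,4)] corner_matrix_toeplitz_col[OF assms(3,4)]]
    unfolding C_def corner_witness_def prod.case .
  show ?thesis
    by (rule in_toep_tensor_cong[OF tensor]) (simp add: expansion)
qed

definition corner_index :: "nat \<Rightarrow> nat \<Rightarrow> nat" where
  "corner_index n \<rho> = (if \<rho> = 0 then 0 else n - 1)"

lemma corner_index_less: "2 \<le> n \<Longrightarrow> corner_index n \<rho> < n"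
  by (simp add: corner_index_def)

lemma corner_index_eq_iff:
  "2 \<le> n \<Longrightarrow> \<rho> < 2 \<Longrightarrow> \<rho>' < 2 \<Longrightarrow> corner_index n \<rho> = corner_index n \<rho>' \<longleftrightarrow> \<rho> = \<rho>'"
  by (auto simp: corner_index_def)

lemma corner_index_class_pos:
  assumes "2 \<le> n" "\<rho> < 2"
  shows "corner_class n (corner_index n \<rho>) = 0" "corner_pos n (corner_index n \<rho>) = \<rho>"
  using assms by (auto simp: corner_index_def corner_class_def corner_pos_def)

lemma corner_witness_at_corners:
  assumes "2 \<le> n" "2 \<le> m" "\<rho> < 2" "\<sigma> < 2" "\<rho>' < 2" "\<sigma>' < 2"
  shows "corner_witness n m i j (corner_index n \<rho>, corner_index m \<sigma>) (corner_index n \<rho>', corner_index m \<sigma>')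
       = corner_matrix i j \<rho> \<sigma> \<rho>' \<sigma>'"
  using assms by (simp add: corner_witness_def corner_index_class_pos)

lemma pos_Mk_toep_corners:
  assumes "pos_Mk_toep n k a" "2 \<le> n"
  shows "psd_on ({..<k} \<times> {..<2})
           (\<lambda>(i, \<rho>) (i', \<rho>'). a i i' (corner_index n \<rho>) (corner_index n \<rho>'))"
    and "\<forall>i<k. \<forall>i'<k. a i i' (corner_index n 1) (corner_index n 1) = a i i' (corner_index n 0) (corner_index n 0)"
proof -
  have "psd_on ({..<k} \<times> {..<n}) (\<lambda>(i, r) (i', r'). a i i' r r')"
    using assms(1) unfolding pos_Mk_toep_def by blast
  then show "psd_on ({..<k} \<times> {..<2})
      (\<lambda>(i, \<rho>) (i', \<rho>'). a i i' (corner_index n \<rho>) (corner_index n \<rho>'))"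
    by (rule psd_on_cong[OF psd_on_reindex[where f = "\<lambda>(i, \<rho>). (i, corner_index n \<rho>)"]])
       (use assms(2) in \<open>auto simp: inj_on_def corner_index_less corner_index_eq_iff\<close>)
  show "\<forall>i<k. \<forall>i'<k. a i i' (corner_index n 1) (corner_index n 1) = a i i' (corner_index n 0) (corner_index n 0)"
  proof (intro allI impI)
    fix i i' assume "i < k" "i' < k"
    then have "toeplitz n (a i i')"
      using assms(1) unfolding pos_Mk_toep_def in_Mk_toep_def by blast
    from this[unfolded toeplitz_def, rule_format, of "n - 1" "n - 1" 0 0]
    show "a i i' (corner_index n 1) (corner_index n 1) = a i i' (corner_index n 0) (corner_index n 0)"
      using assms(2) by (simp add: corner_index_def)
  qed
qed

lemma separating_functional_corners_max_pos:
  assumes "max_pos n m 2 X" "2 \<le> n" "2 \<le> m" "0 < \<epsilon>"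
  shows "0 \<le> 6 * \<epsilon> + Re (separating_functional
           (\<lambda>i j \<rho> \<sigma> \<rho>' \<sigma>'. X i j (corner_index n \<rho>, corner_index m \<sigma>) (corner_index n \<rho>', corner_index m \<sigma>')))"
proof -
  obtain k l a b \<delta> where a: "pos_Mk_toep n k a" and b: "pos_Mk_toep m l b"
    and eq: "\<forall>i<2. \<forall>j<2. \<forall>r<n. \<forall>r'<n. \<forall>s<m. \<forall>s'<m.
               complex_of_real \<epsilon> * (if i = j \<and> r = r' \<and> s = s' then 1 else 0) + X i j (r, s) (r', s')
               = tensor_compress k l a b \<delta> i j r s r' s'"
    using assms(1,4) unfolding max_pos_def tensor_compress_def by blast
  define a2 where "a2 i i' \<rho> \<rho>' = a i i' (corner_index n \<rho>) (corner_index n \<rho>')" for i i' \<rho> \<rho>'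
  define b2 where "b2 j j' \<sigma> \<sigma>' = b j j' (corner_index m \<sigma>) (corner_index m \<sigma>')" for j j' \<sigma> \<sigma>'
  have "0 \<le> Re (separating_functional (tensor_compress k l a2 b2 \<delta>))"
    using pos_Mk_toep_corners[OF a assms(2)] pos_Mk_toep_corners[OF b assms(3)] unfolding a2_def b2_def
    by (intro separating_functional_tensor_compress_nonneg) auto
  also have "separating_functional (tensor_compress k l a2 b2 \<delta>)
      = separating_functional (\<lambda>i j \<rho> \<sigma> \<rho>' \<sigma>'. complex_of_real \<epsilon> * of_bool (i = j \<and> \<rho> = \<rho>' \<and> \<sigma> = \<sigma>')
          + X i j (corner_index n \<rho>, corner_index m \<sigma>) (corner_index n \<rho>', corner_index m \<sigma>'))"
  proof (rule separating_functional_cong)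
    fix i j \<rho> \<sigma> \<rho>' \<sigma>' :: nat
    assume "i < 2" "j < 2" "\<rho> < 2" "\<sigma> < 2" "\<rho>' < 2" "\<sigma>' < 2"
    note indices = this
    have "tensor_compress k l a2 b2 \<delta> i j \<rho> \<sigma> \<rho>' \<sigma>' = tensor_compress k l a b \<delta> i j
        (corner_index n \<rho>) (corner_index m \<sigma>) (corner_index n \<rho>') (corner_index m \<sigma>')"
      by (simp add: tensor_compress_def a2_def b2_def)
    also have "\<dots> = complex_of_real \<epsilon> * (if i = j \<and> corner_index n \<rho> = corner_index n \<rho>'
          \<and> corner_index m \<sigma> = corner_index m \<sigma>' then 1 else 0)
        + X i j (corner_index n \<rho>, corner_index m \<sigma>) (corner_index n \<rho>', corner_index m \<sigma>')"
      using eq indices assms(2,3) by (simp add: corner_index_less)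
    finally show "tensor_compress k l a2 b2 \<delta> i j \<rho> \<sigma> \<rho>' \<sigma>'
        = complex_of_real \<epsilon> * of_bool (i = j \<and> \<rho> = \<rho>' \<and> \<sigma> = \<sigma>')
          + X i j (corner_index n \<rho>, corner_index m \<sigma>) (corner_index n \<rho>', corner_index m \<sigma>')"
      using indices assms(2,3) by (simp add: corner_index_eq_iff)
  qed
  finally show ?thesis
    by (simp add: separating_functional_shift_diag)
qed

lemma corner_witness_not_max_pos:
  assumes "2 \<le> n" "2 \<le> m"
  shows "\<not> max_pos n m 2 (corner_witness n m)"
proof
  assume "max_pos n m 2 (corner_witness n m)"
  from separating_functional_corners_max_pos[OF this assms, of "1 / 6"]
  have "0 \<le> 1 + Re (separating_functional (\<lambda>i j \<rho> \<sigma> \<rho>' \<sigma>'. corner_witness n m i j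
      (corner_index n \<rho>, corner_index m \<sigma>) (corner_index n \<rho>', corner_index m \<sigma>')))"
    by simp
  also have "separating_functional (\<lambda>i j \<rho> \<sigma> \<rho>' \<sigma>'. corner_witness n m i j
      (corner_index n \<rho>, corner_index m \<sigma>) (corner_index n \<rho>', corner_index m \<sigma>')) = - 2"
    unfolding separating_functional_corner_matrix[symmetric]
    by (rule separating_functional_cong) (simp add: assms corner_witness_at_corners)
  finally show False
    by simp
qed

theorem corollary6p6:
  fixes n m :: nat
  assumes "n \<ge> 2" and "m \<ge> 2"
  shows "\<exists>(p::nat) (X :: nat \<Rightarrow> nat \<Rightarrow> nat \<times> nat \<Rightarrow> nat \<times> nat \<Rightarrow> complex).
           in_Mp_tensor n m p X \<and> (min_pos n m p X \<noteq> max_pos n m p X)"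
proof (intro exI conjI)
  show "in_Mp_tensor n m 2 (corner_witness n m)"
    unfolding in_Mp_tensor_def using corner_witness_in_toep_tensor assms by blast
  have "min_pos n m 2 (corner_witness n m)"
    unfolding min_pos_def by (rule psd_on_corner_witness)
  then show "min_pos n m 2 (corner_witness n m) \<noteq> max_pos n m 2 (corner_witness n m)"
    using corner_witness_not_max_pos[OF assms] by blast
qed

end
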